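(* Let $\mathcal{X}$ be a right coideal of $\mathcal{U}$ (i.e. a subspace with $\Delta(\mathcal{X})\subset\mathcal{X}\otimes\mathcal{U}$) and let $X\in\mathcal{X}$, written in the PBW basis as $X=\sum_{i,\nu,j,k}\alpha_{i,\nu,j,k}F^{(i)}f_\nu E^{(j)}G^{(k)}$ (finitely many nonzero $\alpha_{i,\nu,j,k}\in\mathbb{C}$, $\nu\in\mathbb{C}^\times$, $i,j,k\in\mathbb{N}_0$). For $\mu\in\mathbb{C}^\times$ and $r,s,t\in\mathbb{N}_0$ put $$X_{r,\mu,s,t}:=\sum_{i\ge r,\ j\ge s,\ k\ge t}\alpha_{i,\mu,j,k}\,F^{(i-r)}f_{q^{-r-s}\mu}E^{(j-s)}G^{(k-t)}.$$ Then every $X_{r,\mu,s,t}$ lies in $\mathcal{X}$, and $\mathrm{Lin}\{X_{r,\mu,s,t}: r,s,t\in\mathbb{N}_0,\mu\in\mathbb{C}^\times\}$ is the smallest right coideal of $\mathcal{U}$ containing $X$.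
   Context: Let $q\in\mathbb{C}$ be transcendental (in particular $q\ne0$ and not a root of unity). $\mathcal{U}$ is the unital algebra generated by $E,F,G$ and $f_\mu$ ($\mu\in\mathbb{C}^\times=\mathbb{C}\setminus\{0\}$) with relations $f_\mu f_\nu=f_{\mu\nu}$, $f_\mu E=\mu^2Ef_\mu$, $f_\mu F=\mu^{-2}Ff_\mu$, $f_\mu G=Gf_\mu$, $GE=E(G+2)$, $GF=F(G-2)$, $EF-FE=(f_q-f_{q^{-1}})/(q-q^{-1})$; $f_1=1$. Fix $q^{1/2}$ and put $K=f_{q^{1/2}}$. $\mathcal{U}$ is a Hopf algebra with $\Delta E=E\otimes K+K^{-1}\otimes E$, $\Delta F=F\otimes K+K^{-1}\otimes F$, $\Delta G=1\otimes G+G\otimes1$, $\Delta f_\mu=f_\mu\otimes f_\mu$, $\varepsilon(E)=\varepsilon(F)=\varepsilon(G)=0$, $\varepsilon(f_\mu)=1$. Let $[k]=(q^k-q^{-k})/(q-q^{-1})$, $[k]!=[k]\cdots[1]$, $[0]!=1$, and $F^{(k)}=F^kK^{-k}/[k]!$, $E^{(k)}=K^{-k}E^k/[k]!$, $G^{(k)}=G^k/k!$. The elements $F^{(i)}f_\mu E^{(j)}G^{(k)}$ ($i,j,k\in\mathbb{N}_0$, $\mu\in\mathbb{C}^\times$) form a vector space basis of $\mathcal{U}$ (PBW basis). *)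

theory Defs
  imports Complex_Main "HOL-Computational_Algebra.Polynomial"
begin

text \<open>
  Model of the underlying vector space (and coalgebra) of U via its PBW basis.
  The index (i, nu, j, k) stands for the PBW basis element F^(i) f_nu E^(j) G^(k),
  where nu must be nonzero.  An element of U (x) U is a coefficient
  function on pairs of indices (basis of U (x) U = tensor products of PBW elements).
\<close>

type_synonym pbw_idx = "nat \<times> complex \<times> nat \<times> nat"

definition U_space :: "(pbw_idx \<Rightarrow> complex) set" where
  "U_space = {x. finite {b. x b \<noteq> 0} \<and> (\<forall>i nu j k. x (i, nu, j, k) \<noteq> 0 \<longrightarrow> nu \<noteq> 0)}"

definition pbw :: "nat \<Rightarrow> complex \<Rightarrow> nat \<Rightarrow> nat \<Rightarrow> pbw_idx \<Rightarrow> complex" where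
  "pbw i nu j k = (\<lambda>b. if b = (i, nu, j, k) then 1 else 0)"

text \<open>
  From Delta(F^(n)) = sum_{a+b=n} F^(a) f_{q^-b} (x) F^(b),
  Delta(E^(n)) = sum_{c+d=n} f_{q^-d} E^(c) (x) E^(d), Delta(G^(n)) = sum G^(e) (x) G^(g),
  Delta(f_nu) = f_nu (x) f_nu one gets
  Delta(F^(i) f_nu E^(j) G^(k)) =
    sum_{a+b=i, c+d=j, e+g=k} F^(a) f_{q^(-b-d) nu} E^(c) G^(e) (x) F^(b) f_nu E^(d) G^(g),
  and Delta is extended linearly.
\<close>
definition coprod :: "complex \<Rightarrow> (pbw_idx \<Rightarrow> complex) \<Rightarrow> (pbw_idx \<times> pbw_idx \<Rightarrow> complex)" where
  "coprod q x = (\<lambda>((i1, n1, j1, k1), (i2, n2, j2, k2)).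
      if n1 = inverse q ^ (i2 + j2) * n2 then x (i1 + i2, n2, j1 + j2, k1 + k2) else 0)"

definition subspace_U :: "(pbw_idx \<Rightarrow> complex) set \<Rightarrow> bool" where
  "subspace_U V \<longleftrightarrow> V \<subseteq> U_space \<and> (\<lambda>_. 0) \<in> V
     \<and> (\<forall>x\<in>V. \<forall>y\<in>V. (\<lambda>b. x b + y b) \<in> V)
     \<and> (\<forall>c. \<forall>x\<in>V. (\<lambda>b. c * x b) \<in> V)"

text \<open>Since U has a basis, an element T of U (x) U
  lies in V (x) U iff for each basis element b2 of the second factor the slice
  b1 \<mapsto> T(b1, b2) lies in V.\<close>
definition right_coideal :: "complex \<Rightarrow> (pbw_idx \<Rightarrow> complex) set \<Rightarrow> bool" where
  "right_coideal q V \<longleftrightarrow> subspace_U V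
     \<and> (\<forall>x\<in>V. \<forall>b2. (\<lambda>b1. coprod q x (b1, b2)) \<in> V)"

definition lin_span :: "(pbw_idx \<Rightarrow> complex) set \<Rightarrow> (pbw_idx \<Rightarrow> complex) set" where
  "lin_span S = {x. \<exists>A c. finite A \<and> A \<subseteq> S \<and> x = (\<lambda>b. \<Sum>a\<in>A. c a * a b)}"

definition Xsub :: "complex \<Rightarrow> (pbw_idx \<Rightarrow> complex) \<Rightarrow> nat \<Rightarrow> complex \<Rightarrow> nat \<Rightarrow> nat
    \<Rightarrow> (pbw_idx \<Rightarrow> complex)" where
  "Xsub q X r mu s t = (\<lambda>(i, nu, j, k).
      if nu = inverse q ^ (r + s) * mu then X (i + r, mu, j + s, k + t) else 0)"

end

theory Submission
  imports Defs
begin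

text \<open>
  In PBW coordinates the slice of \<open>\<Delta>(X)\<close> at the basis element
  \<open>F^(r) f_\<mu> E^(s) G^(t)\<close> of the second tensor factor is exactly \<open>X_{r,\<mu>,s,t}\<close>.
  Hence a subspace is a right coideal iff it is closed under the linear maps
  \<open>X \<mapsto> X_{r,\<mu>,s,t}\<close>.  These maps compose: \<open>(X_{r,\<mu>,s,t})_{r',\<mu>',s',t'}\<close> is either
  \<open>X_{r+r',\<mu>,s+s',t+t'}\<close> or \<open>0\<close>, so the span of all \<open>X_{r,\<mu>,s,t}\<close> is a right coideal.
  It contains \<open>X = \<Sum>\<^sub>\<mu> X_{0,\<mu>,0,0}\<close>, and it lies in every right coideal containing \<open>X\<close>.
\<close>

lemma lin_span_zero: "(\<lambda>_. 0) \<in> lin_span S"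
  unfolding lin_span_def by (intro CollectI exI[of _ "{}"]) auto

lemma lin_span_superset: "a \<in> S \<Longrightarrow> a \<in> lin_span S"
  unfolding lin_span_def by (intro CollectI exI[of _ "{a}"] exI[of _ "\<lambda>_. 1"]) auto

lemma lin_span_add:
  assumes "x \<in> lin_span S" "y \<in> lin_span S"
  shows "(\<lambda>b. x b + y b) \<in> lin_span S"
proof -
  obtain A c where A: "finite A" "A \<subseteq> S" "x = (\<lambda>b. \<Sum>a\<in>A. c a * a b)"
    using assms(1) unfolding lin_span_def by blast
  obtain B d where B: "finite B" "B \<subseteq> S" "y = (\<lambda>b. \<Sum>a\<in>B. d a * a b)"
    using assms(2) unfolding lin_span_def by blast
  define e where "e a = (if a \<in> A then c a else 0) + (if a \<in> B then d a else 0)" for a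
  have "(\<Sum>a\<in>A \<union> B. e a * a b) = x b + y b" for b
  proof -
    have "(\<Sum>a\<in>A \<union> B. e a * a b)
        = (\<Sum>a\<in>A \<union> B. if a \<in> A then c a * a b else 0)
          + (\<Sum>a\<in>A \<union> B. if a \<in> B then d a * a b else 0)"
      unfolding sum.distrib[symmetric] by (rule sum.cong) (simp_all add: e_def distrib_right)
    also have "\<dots> = (\<Sum>a\<in>(A \<union> B) \<inter> A. c a * a b) + (\<Sum>a\<in>(A \<union> B) \<inter> B. d a * a b)"
      using A(1) B(1) by (simp only: sum.inter_restrict finite_Un)
    also have "\<dots> = x b + y b"
      by (simp add: A(3) B(3) Int_absorb1)
    finally show ?thesis .
  qed
  then show ?thesis
    unfolding lin_span_def using A B by (intro CollectI exI[of _ "A \<union> B"] exI[of _ e]) auto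
qed

lemma lin_span_smult:
  assumes "x \<in> lin_span S"
  shows "(\<lambda>b. d * x b) \<in> lin_span S"
proof -
  obtain A c where A: "finite A" "A \<subseteq> S" "x = (\<lambda>b. \<Sum>a\<in>A. c a * a b)"
    using assms unfolding lin_span_def by blast
  have "(\<lambda>b. d * x b) = (\<lambda>b. \<Sum>a\<in>A. (d * c a) * a b)"
    unfolding A(3) by (simp add: sum_distrib_left mult.assoc)
  then show ?thesis
    unfolding lin_span_def using A(1,2) by (intro CollectI exI conjI)
qed

lemma lin_span_sum:
  assumes "finite A" "\<And>a. a \<in> A \<Longrightarrow> g a \<in> lin_span S"
  shows "(\<lambda>b. \<Sum>a\<in>A. c a * g a b) \<in> lin_span S"
  using assms
proof (induction A rule: finite_induct)
  case empty
  then show ?case using lin_span_zero by simp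
next
  case (insert a A)
  have "(\<lambda>b. c a * g a b + (\<Sum>a\<in>A. c a * g a b)) \<in> lin_span S"
    using insert by (intro lin_span_add lin_span_smult) auto
  then show ?case using insert.hyps by simp
qed

lemma subspace_U_sum:
  assumes "subspace_U W" "finite A" "A \<subseteq> W"
  shows "(\<lambda>b. \<Sum>a\<in>A. c a * a b) \<in> W"
  using assms(2,3)
proof (induction A rule: finite_induct)
  case empty
  then show ?case using assms(1) unfolding subspace_U_def by simp
next
  case (insert a A)
  have "(\<lambda>b. c a * a b) \<in> W" "(\<lambda>b. \<Sum>a\<in>A. c a * a b) \<in> W"
    using insert assms(1) unfolding subspace_U_def by simp_all
  then have "(\<lambda>b. c a * a b + (\<Sum>a\<in>A. c a * a b)) \<in> W"
    using assms(1) unfolding subspace_U_def by simp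
  then show ?case using insert.hyps by simp
qed

lemma lin_span_least: "subspace_U W \<Longrightarrow> S \<subseteq> W \<Longrightarrow> lin_span S \<subseteq> W"
  unfolding lin_span_def using subspace_U_sum by fastforce

lemma subspace_U_lin_span:
  assumes "subspace_U V" "S \<subseteq> V"
  shows "subspace_U (lin_span S)"
  using lin_span_least[OF assms] assms(1) lin_span_zero lin_span_add lin_span_smult
  unfolding subspace_U_def by blast

lemma coprod_slice_eq_Xsub: "(\<lambda>b1. coprod q x (b1, (r, mu, s, t))) = Xsub q x r mu s t"
  unfolding coprod_def Xsub_def by (auto simp: power_add)

lemma right_coideal_iff_Xsub:
  "right_coideal q V \<longleftrightarrow> subspace_U V \<and> (\<forall>x\<in>V. \<forall>r mu s t. Xsub q x r mu s t \<in> V)"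
  unfolding right_coideal_def by (metis coprod_slice_eq_Xsub prod_cases4)

lemma Xsub_sum:
  "Xsub q (\<lambda>b. \<Sum>a\<in>A. c a * a b) r mu s t = (\<lambda>b. \<Sum>a\<in>A. c a * Xsub q a r mu s t b)"
  unfolding Xsub_def by (auto simp: fun_eq_iff)

lemma Xsub_Xsub:
  "Xsub q (Xsub q X r mu s t) r' mu' s' t' =
    (if mu' = inverse q ^ (r + s) * mu then Xsub q X (r + r') mu (s + s') (t + t') else (\<lambda>_. 0))"
  unfolding Xsub_def by (auto simp: power_add algebra_simps fun_eq_iff)

lemma Xsub_lin_span_closed:
  assumes "\<And>a r mu s t. a \<in> S \<Longrightarrow> Xsub q a r mu s t \<in> lin_span S"
    and "x \<in> lin_span S"
  shows "Xsub q x r mu s t \<in> lin_span S"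
proof -
  obtain A c where A: "finite A" "A \<subseteq> S" "x = (\<lambda>b. \<Sum>a\<in>A. c a * a b)"
    using assms(2) unfolding lin_span_def by blast
  show ?thesis
    unfolding A(3) Xsub_sum using A(1,2) assms(1) by (intro lin_span_sum) auto
qed

lemma mem_lin_span_Xsub:
  assumes "X \<in> U_space"
  shows "X \<in> lin_span {Xsub q X r mu s t | r mu s t. mu \<noteq> 0}"
proof -
  define M where "M = (\<lambda>(i, nu, j, k). nu) ` {b. X b \<noteq> 0}"
  have "finite M" "0 \<notin> M"
    using assms unfolding U_space_def M_def by auto
  have "(\<lambda>b. \<Sum>mu\<in>M. 1 * Xsub q X 0 mu 0 0 b) = X"
  proof
    fix b :: pbw_idx
    obtain i nu j k where b: "b = (i, nu, j, k)" by (cases b) auto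
    show "(\<Sum>mu\<in>M. 1 * Xsub q X 0 mu 0 0 b) = X b"
    proof (cases "nu \<in> M")
      case True
      then show ?thesis
        using \<open>finite M\<close> by (simp add: sum.remove[of _ nu] b Xsub_def)
    next
      case False
      then have "X b = 0" unfolding M_def b by force
      then show ?thesis using False by (auto simp: b Xsub_def intro!: sum.neutral)
    qed
  qed
  moreover have "(\<lambda>b. \<Sum>mu\<in>M. 1 * Xsub q X 0 mu 0 0 b) \<in> lin_span {Xsub q X r mu s t | r mu s t. mu \<noteq> 0}"
  proof (rule lin_span_sum[OF \<open>finite M\<close>])
    show "Xsub q X 0 mu 0 0 \<in> lin_span {Xsub q X r mu s t | r mu s t. mu \<noteq> 0}" if "mu \<in> M" for mu
      using \<open>0 \<notin> M\<close> that by (auto intro!: lin_span_superset)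
  qed
  ultimately show ?thesis by simp
qed

lemma Xsub_subset_right_coideal:
  assumes "right_coideal q W" "X \<in> W"
  shows "{Xsub q X r mu s t | r mu s t. mu \<noteq> 0} \<subseteq> W"
  using assms unfolding right_coideal_iff_Xsub by blast

lemma right_coideal_lin_span_Xsub:
  assumes "right_coideal q V" "X \<in> V"
  shows "right_coideal q (lin_span {Xsub q X r mu s t | r mu s t. mu \<noteq> 0})"
    (is "right_coideal q (lin_span ?S)")
  unfolding right_coideal_iff_Xsub
proof (intro conjI ballI allI)
  show "subspace_U (lin_span ?S)"
    using assms Xsub_subset_right_coideal[OF assms]
    by (intro subspace_U_lin_span[of V]) (simp_all add: right_coideal_def)
  have S_Xsub: "Xsub q a r' mu' s' t' \<in> lin_span ?S" if a: "a \<in> ?S" for a r' mu' s' t'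
  proof -
    obtain r mu s t where "a = Xsub q X r mu s t" "mu \<noteq> 0"
      using a by blast
    then show ?thesis
      by (auto simp: Xsub_Xsub lin_span_zero intro!: lin_span_superset)
  qed
  show "Xsub q x r mu s t \<in> lin_span ?S" if "x \<in> lin_span ?S" for x r mu s t
    using S_Xsub that by (rule Xsub_lin_span_closed)
qed

theorem proposition4p1:
  fixes q :: complex and V :: "(pbw_idx \<Rightarrow> complex) set" and X :: "pbw_idx \<Rightarrow> complex"
  assumes "\<not> algebraic q"
    and "right_coideal q V"
    and "X \<in> V"
  shows "(\<forall>r mu s t. mu \<noteq> 0 \<longrightarrow> Xsub q X r mu s t \<in> V)
    \<and> right_coideal q (lin_span {Xsub q X r mu s t | r mu s t. mu \<noteq> 0})
    \<and> X \<in> lin_span {Xsub q X r mu s t | r mu s t. mu \<noteq> 0}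
    \<and> (\<forall>W. right_coideal q W \<and> X \<in> W
          \<longrightarrow> lin_span {Xsub q X r mu s t | r mu s t. mu \<noteq> 0} \<subseteq> W)"
proof (intro conjI allI impI)
  \<comment> \<open>Transcendence of \<open>q\<close> is only needed for the PBW basis and the coproduct formula,
    both of which are built into the coordinate model.\<close>
  show "Xsub q X r mu s t \<in> V" if "mu \<noteq> 0" for r mu s t
    using Xsub_subset_right_coideal[OF assms(2,3)] that by blast
  show "right_coideal q (lin_span {Xsub q X r mu s t | r mu s t. mu \<noteq> 0})"
    using assms(2,3) by (rule right_coideal_lin_span_Xsub)
  show "X \<in> lin_span {Xsub q X r mu s t | r mu s t. mu \<noteq> 0}"
    using assms(2,3) by (intro mem_lin_span_Xsub) (auto simp: right_coideal_def subspace_U_def)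
  show "lin_span {Xsub q X r mu s t | r mu s t. mu \<noteq> 0} \<subseteq> W"
    if "right_coideal q W \<and> X \<in> W" for W
    using that by (intro lin_span_least Xsub_subset_right_coideal) (simp_all add: right_coideal_def)
qed

end
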